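(* Let $n\ge3$, $k\ge0$ with $k<n\le2k$. If $S\subseteq\mathrm{Inc}(A,B)$ is independent in $G_n^k$ and not reversible, then every strict alternating cycle contained in $S$ has size $3$.
   Context: For integers $n\ge3$, $k\ge0$, the crown $S_n^k$ is the poset with ground set $A\cup B$, $A=\{a_1,\dots,a_{n+k}\}$, $B=\{b_1,\dots,b_{n+k}\}$, indices cyclic modulo $n+k$; elements of $A$ are pairwise incomparable, as are elements of $B$, and $a_i$ is incomparable to $b_j$ when $j\in\{i,\dots,i+k\}$ (mod $n+k$), while $a_i<b_j$ otherwise. $\mathrm{Inc}(A,B)$ is the set of pairs $(a,b)\in A\times B$ with $a$ incomparable to $b$; $G_n^k$ has vertex set $\mathrm{Inc}(A,B)$ with $(a,b)$ adjacent to $(x,y)$ iff $a<y$ and $x<b$. A set $R\subseteq\mathrm{Inc}(A,B)$ is reversible if some linear extension $L$ of $S_n^k$ has $b<a$ in $L$ for all $(a,b)\in R$. An indexed set $\{(x_\alpha,y_\alpha):\alpha\in[m]\}\subseteq\mathrm{Inc}(A,B)$ is an alternating cycle of size $m$ if $x_\alpha\le y_{\alpha-1}$ for all $\alpha$ (indices cyclic mod $m$); it is strict if $x_\alpha\le y_\beta$ holds iff $\beta=\alpha-1$. *)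

theory Defs
  imports Main
begin

text \<open>Elements of the crown S_n^k: CA i stands for a_i, CB j for b_j, with indices in {0..<n+k}
  (cyclic modulo n+k).\<close>
datatype celt = CA nat | CB nat

definition crown_ground :: "nat \<Rightarrow> nat \<Rightarrow> celt set" where
  "crown_ground n k = CA ` {..<n+k} \<union> CB ` {..<n+k}"

definition crown_incomp_idx :: "nat \<Rightarrow> nat \<Rightarrow> nat \<Rightarrow> nat \<Rightarrow> bool" where
  "crown_incomp_idx n k i j \<longleftrightarrow> (\<exists>t\<le>k. j = (i + t) mod (n + k))"

definition crown_less :: "nat \<Rightarrow> nat \<Rightarrow> celt \<Rightarrow> celt \<Rightarrow> bool" where
  "crown_less n k x y \<longleftrightarrow> (\<exists>i j. x = CA i \<and> y = CB j \<and> i < n + k \<and> j < n + k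
       \<and> \<not> crown_incomp_idx n k i j)"

definition crown_le :: "nat \<Rightarrow> nat \<Rightarrow> celt \<Rightarrow> celt \<Rightarrow> bool" where
  "crown_le n k x y \<longleftrightarrow> x = y \<or> crown_less n k x y"

definition Inc :: "nat \<Rightarrow> nat \<Rightarrow> (celt \<times> celt) set" where
  "Inc n k = {(CA i, CB j) | i j. i < n + k \<and> j < n + k \<and> crown_incomp_idx n k i j}"

definition G_adj :: "nat \<Rightarrow> nat \<Rightarrow> celt \<times> celt \<Rightarrow> celt \<times> celt \<Rightarrow> bool" where
  "G_adj n k u v \<longleftrightarrow> u \<in> Inc n k \<and> v \<in> Inc n k \<and>
     crown_less n k (fst u) (snd v) \<and> crown_less n k (fst v) (snd u)"

definition G_independent :: "nat \<Rightarrow> nat \<Rightarrow> (celt \<times> celt) set \<Rightarrow> bool" where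
  "G_independent n k S \<longleftrightarrow> S \<subseteq> Inc n k \<and> (\<forall>u\<in>S. \<forall>v\<in>S. \<not> G_adj n k u v)"

definition linear_extension :: "nat \<Rightarrow> nat \<Rightarrow> celt rel \<Rightarrow> bool" where
  "linear_extension n k L \<longleftrightarrow> L \<subseteq> crown_ground n k \<times> crown_ground n k \<and>
     strict_linear_order_on (crown_ground n k) L \<and>
     (\<forall>x y. crown_less n k x y \<longrightarrow> (x, y) \<in> L)"

definition reversible :: "nat \<Rightarrow> nat \<Rightarrow> (celt \<times> celt) set \<Rightarrow> bool" where
  "reversible n k R \<longleftrightarrow> R \<subseteq> Inc n k \<and>
     (\<exists>L. linear_extension n k L \<and> (\<forall>(a, b)\<in>R. (b, a) \<in> L))"

text \<open>An alternating cycle of size m, indexed by {0..<m} with cyclic predecessor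
  (\<alpha> + m - 1) mod m; the indexing is injective (an indexed set of m elements).\<close>
definition alt_cycle :: "nat \<Rightarrow> nat \<Rightarrow> (nat \<Rightarrow> celt \<times> celt) \<Rightarrow> nat \<Rightarrow> bool" where
  "alt_cycle n k c m \<longleftrightarrow> 0 < m \<and> inj_on c {..<m} \<and> c ` {..<m} \<subseteq> Inc n k \<and>
     (\<forall>\<alpha><m. crown_le n k (fst (c \<alpha>)) (snd (c ((\<alpha> + m - 1) mod m))))"

definition strict_alt_cycle :: "nat \<Rightarrow> nat \<Rightarrow> (nat \<Rightarrow> celt \<times> celt) \<Rightarrow> nat \<Rightarrow> bool" where
  "strict_alt_cycle n k c m \<longleftrightarrow> alt_cycle n k c m \<and>
     (\<forall>\<alpha><m. \<forall>\<beta><m. crown_le n k (fst (c \<alpha>)) (snd (c \<beta>)) \<longleftrightarrow> \<beta> = (\<alpha> + m - 1) mod m)"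

end

theory Submission
  imports Defs
begin

text \<open>Write N = n + k. An element (a_i, b_j) of Inc(A,B) says that j lies in the cyclic interval
  {i, ..., i + k} of Z/N. In a strict alternating cycle the a-index of each element is therefore
  an interval containing the b-indices of all elements except its predecessor. A cycle of size 1
  would make an incomparable pair comparable, and a cycle of size 2 is an edge of G_n^k, so it
  cannot lie in an independent set. For size at least 4, take the b-indices of four consecutive
  elements and the intervals of their successors: each interval of length k + 1 misses exactly
  one of the four points, so each of the four arcs of the cycle spanned by three consecutive
  points has length at most k. These arcs cover the cycle twice, giving 2N \<le> 4k, against k < n.\<close>

definition in_cyclic_interval :: "nat \<Rightarrow> nat \<Rightarrow> nat \<Rightarrow> nat \<Rightarrow> bool" where
  "in_cyclic_interval N k s p \<longleftrightarrow> (s \<le> p \<and> p \<le> s + k) \<or> p + N \<le> s + k"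

lemma crown_incomp_idx_iff_in_cyclic_interval:
  assumes "i < n + k" "j < n + k"
  shows "crown_incomp_idx n k i j \<longleftrightarrow> in_cyclic_interval (n + k) k i j"
proof
  assume "crown_incomp_idx n k i j"
  then obtain t where "t \<le> k" "j = (i + t) mod (n + k)"
    unfolding crown_incomp_idx_def by blast
  then show "in_cyclic_interval (n + k) k i j"
    using assms unfolding in_cyclic_interval_def
    by (cases "i + t < n + k") (auto simp: le_mod_geq)
next
  assume "in_cyclic_interval (n + k) k i j"
  then consider "i \<le> j" "j \<le> i + k" | "j + (n + k) \<le> i + k"
    unfolding in_cyclic_interval_def by blast
  then show "crown_incomp_idx n k i j"
  proof cases
    case 1
    then show ?thesis
      using assms unfolding crown_incomp_idx_def by (intro exI[of _ "j - i"]) auto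
  next
    case 2
    then have "(i + (j + (n + k) - i)) mod (n + k) = j"
      using assms by simp
    with 2 show ?thesis
      unfolding crown_incomp_idx_def by (intro exI[of _ "j + (n + k) - i"]) auto
  qed
qed

lemma sorted_four_points_separated_by_intervals:
  fixes a b c d N k :: nat
  assumes "2 * k < N" "a < b" "b < c" "c < d" "d < N"
    and "\<not> in_cyclic_interval N k sa a" "in_cyclic_interval N k sa b"
      "in_cyclic_interval N k sa c" "in_cyclic_interval N k sa d"
    and "\<not> in_cyclic_interval N k sb b" "in_cyclic_interval N k sb a"
      "in_cyclic_interval N k sb c" "in_cyclic_interval N k sb d"
    and "\<not> in_cyclic_interval N k sc c" "in_cyclic_interval N k sc a"
      "in_cyclic_interval N k sc b" "in_cyclic_interval N k sc d"
    and "\<not> in_cyclic_interval N k sd d" "in_cyclic_interval N k sd a"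
      "in_cyclic_interval N k sd b" "in_cyclic_interval N k sd c"
  shows False
proof -
  have "d - b \<le> k" "N + a - c \<le> k" "N + b - d \<le> k" "c - a \<le> k"
    using assms unfolding in_cyclic_interval_def by auto
  then show False using assms(1-5) by linarith
qed

lemma four_points_not_separated_by_intervals:
  assumes "2 * k < N" "card P = 4" "P \<subseteq> {..<N}"
    and separated: "\<And>x. x \<in> P \<Longrightarrow>
      \<exists>s. \<not> in_cyclic_interval N k s x \<and> (\<forall>y \<in> P - {x}. in_cyclic_interval N k s y)"
  shows False
proof -
  define xs where "xs = sorted_list_of_set P"
  have "finite P" using assms(2) card.infinite by fastforce
  then have "length xs = 4" "sorted_wrt (<) xs" "set xs = P"
    using assms(2) unfolding xs_def by auto
  then obtain a b c d where xs: "xs = [a, b, c, d]"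
    by (auto simp: length_Suc_conv eval_nat_numeral)
  with \<open>sorted_wrt (<) xs\<close> \<open>set xs = P\<close> have "a < b" "b < c" "c < d" and P: "P = {a, b, c, d}"
    by auto
  have sep: "\<exists>s. \<not> in_cyclic_interval N k s x \<and> (\<forall>y \<in> {a, b, c, d} - {x}. in_cyclic_interval N k s y)"
    if "x \<in> {a, b, c, d}" for x
    using separated that unfolding P .
  obtain sa sb sc sd where
      "\<not> in_cyclic_interval N k sa a" "\<forall>y \<in> {a, b, c, d} - {a}. in_cyclic_interval N k sa y"
      "\<not> in_cyclic_interval N k sb b" "\<forall>y \<in> {a, b, c, d} - {b}. in_cyclic_interval N k sb y"
      "\<not> in_cyclic_interval N k sc c" "\<forall>y \<in> {a, b, c, d} - {c}. in_cyclic_interval N k sc y"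
      "\<not> in_cyclic_interval N k sd d" "\<forall>y \<in> {a, b, c, d} - {d}. in_cyclic_interval N k sd y"
    using sep[of a] sep[of b] sep[of c] sep[of d] by blast
  moreover have "d < N" using assms(3) P by auto
  moreover have "a \<noteq> b" "a \<noteq> c" "a \<noteq> d" "b \<noteq> c" "b \<noteq> d" "c \<noteq> d"
    using \<open>a < b\<close> \<open>b < c\<close> \<open>c < d\<close> by auto
  ultimately show False
    using sorted_four_points_separated_by_intervals[of k N a b c d sa sb sc sd]
      assms(1) \<open>a < b\<close> \<open>b < c\<close> \<open>c < d\<close>
    by simp
qed

lemma Inc_crown_le_iff_crown_less:
  assumes "(x, y) \<in> Inc n k" "(x', y') \<in> Inc n k"
  shows "crown_le n k x y' \<longleftrightarrow> crown_less n k x y'"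
  using assms unfolding Inc_def crown_le_def by auto

lemma Inc_not_crown_le:
  assumes "(x, y) \<in> Inc n k"
  shows "\<not> crown_le n k x y"
  using assms unfolding Inc_def crown_le_def crown_less_def by auto

lemma not_strict_alt_cycle_1: "\<not> strict_alt_cycle n k c 1"
proof
  assume "strict_alt_cycle n k c 1"
  then have "c 0 \<in> Inc n k" "crown_le n k (fst (c 0)) (snd (c 0))"
    unfolding strict_alt_cycle_def alt_cycle_def by auto
  then show False
    using Inc_not_crown_le[of "fst (c 0)" "snd (c 0)"] by simp
qed

lemma strict_alt_cycle_2_adjacent:
  assumes "strict_alt_cycle n k c 2"
  shows "G_adj n k (c 0) (c 1)"
proof -
  have Inc: "c 0 \<in> Inc n k" "c 1 \<in> Inc n k"
    and "crown_le n k (fst (c 0)) (snd (c 1))" "crown_le n k (fst (c 1)) (snd (c 0))"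
    using assms unfolding strict_alt_cycle_def alt_cycle_def by auto
  then show ?thesis
    unfolding G_adj_def
    using Inc_crown_le_iff_crown_less[of "fst (c 0)" "snd (c 0)" n k "fst (c 1)" "snd (c 1)"]
      Inc_crown_le_iff_crown_less[of "fst (c 1)" "snd (c 1)" n k "fst (c 0)" "snd (c 0)"]
    by simp
qed

lemma strict_alt_cycle_indices:
  assumes "strict_alt_cycle n k c m"
  obtains I J where
    "\<And>a. a < m \<Longrightarrow> c a = (CA (I a), CB (J a)) \<and> I a < n + k \<and> J a < n + k"
    "\<And>a b. a < m \<Longrightarrow> b < m \<Longrightarrow>
       crown_incomp_idx n k (I a) (J b) \<longleftrightarrow> b \<noteq> (a + m - 1) mod m"
proof -
  define I where "I a = (case fst (c a) of CA i \<Rightarrow> i | CB i \<Rightarrow> i)" for a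
  define J where "J a = (case snd (c a) of CA j \<Rightarrow> j | CB j \<Rightarrow> j)" for a
  have idx: "c a = (CA (I a), CB (J a)) \<and> I a < n + k \<and> J a < n + k" if "a < m" for a
    using assms that unfolding strict_alt_cycle_def alt_cycle_def Inc_def I_def J_def by auto
  moreover have "crown_incomp_idx n k (I a) (J b) \<longleftrightarrow> b \<noteq> (a + m - 1) mod m"
    if "a < m" "b < m" for a b
  proof -
    have "crown_le n k (fst (c a)) (snd (c b)) \<longleftrightarrow> b = (a + m - 1) mod m"
      using assms that unfolding strict_alt_cycle_def by blast
    then show ?thesis
      using idx[OF that(1)] idx[OF that(2)] unfolding crown_le_def crown_less_def by auto
  qed
  ultimately show thesis using that by blast
qed

lemma cyclic_pred_of_succ:
  fixes u m :: nat
  assumes "u < m"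
  shows "((u + 1) mod m + m - 1) mod m = u"
proof (cases "u + 1 = m")
  case True
  then show ?thesis by simp
next
  case False
  with assms have "(u + 1) mod m + m - 1 = u + m" by simp
  with assms show ?thesis by simp
qed

lemma strict_alt_cycle_size_lt_4:
  assumes "k < n" "strict_alt_cycle n k c m"
  shows "m < 4"
proof (rule ccontr)
  assume "\<not> m < 4"
  obtain I J where idx: "\<And>a. a < m \<Longrightarrow> c a = (CA (I a), CB (J a)) \<and> I a < n + k \<and> J a < n + k"
    and incomp: "\<And>a b. a < m \<Longrightarrow> b < m \<Longrightarrow>
       crown_incomp_idx n k (I a) (J b) \<longleftrightarrow> b \<noteq> (a + m - 1) mod m"
    using strict_alt_cycle_indices[OF assms(2)] by blast
  define sep where "sep u = I ((u + 1) mod m)" for u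
  have in_interval: "in_cyclic_interval (n + k) k (sep u) (J v) \<longleftrightarrow> v \<noteq> u"
    if "u < m" "v < m" for u v
    using incomp[of "(u + 1) mod m" v] idx[of "(u + 1) mod m"] idx[of v] that
      crown_incomp_idx_iff_in_cyclic_interval[of "sep u" n k "J v"] cyclic_pred_of_succ[of u m]
    unfolding sep_def by simp
  show False
  proof (rule four_points_not_separated_by_intervals)
    show "2 * k < n + k" using assms(1) by simp
    have "inj_on J {..<4}"
      using in_interval \<open>\<not> m < 4\<close> by (intro inj_onI) (metis lessThan_iff order_less_le_trans not_le)
    then show "card (J ` {..<4}) = 4" by (simp add: card_image)
    show "J ` {..<4} \<subseteq> {..<n + k}" using idx \<open>\<not> m < 4\<close> by auto
    fix x assume "x \<in> J ` {..<4}"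
    then obtain u where "u < 4" "x = J u" by blast
    then show "\<exists>s. \<not> in_cyclic_interval (n + k) k s x \<and>
        (\<forall>y \<in> J ` {..<4} - {x}. in_cyclic_interval (n + k) k s y)"
      using in_interval \<open>\<not> m < 4\<close> by (intro exI[of _ "sep u"]) auto
  qed
qed

theorem proposition5p1:
  fixes n k m :: nat and S :: "(celt \<times> celt) set" and c :: "nat \<Rightarrow> celt \<times> celt"
  assumes "n \<ge> 3" and "k < n" and "n \<le> 2 * k"
    and "S \<subseteq> Inc n k"
    and "G_independent n k S"
    and "\<not> reversible n k S"
    and "strict_alt_cycle n k c m"
    and "c ` {..<m} \<subseteq> S"
  shows "m = 3"
proof -
  have "m \<noteq> 0" using assms(7) unfolding strict_alt_cycle_def alt_cycle_def by simp
  moreover have "m \<noteq> 1" using assms(7) not_strict_alt_cycle_1 by blast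
  moreover have "m \<noteq> 2"
  proof
    assume "m = 2"
    then have "G_adj n k (c 0) (c 1)" "c 0 \<in> S" "c 1 \<in> S"
      using assms(7,8) strict_alt_cycle_2_adjacent by auto
    with assms(5) show False unfolding G_independent_def by blast
  qed
  moreover have "m < 4" using assms(2,7) by (rule strict_alt_cycle_size_lt_4)
  ultimately show "m = 3" by linarith
qed

end
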